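(* Let $K$ be a field, let $\mathcal{H}$ be a complete $s$-uniform $t$-partite hypergraph with $2\leq s\leq t$ on vertex set $\{x_1,\ldots,x_n\}$, $R=K[x_1,\ldots,x_n]$, with sides $V_1,\ldots,V_t$ satisfying $|V_1|\leq|V_2|\leq\cdots\leq|V_t|$. Then: (a) the facets of $\mathrm{Ind}(\mathcal{H})$ are exactly the sets $\bigcup_{j=1}^{s-1}V_{i_j}$ for $1\leq i_1<\cdots<i_{s-1}\leq t$; (b) $\mathrm{Tr}(\mathcal{H})=\{\bigcup_{j=1}^{t-s+1}V_{i_j}: 1\leq i_1<\cdots<i_{t-s+1}\leq t\}$; (c) $i(\mathcal{H})=\sum_{i=t-s+2}^{t}|V_i|$ and $\tau(\mathcal{H})=\sum_{i=1}^{t-s+1}|V_i|$; (d) $\dim(R/I(\mathcal{H}))=\dim(\mathrm{Ind}(\mathcal{H}))+1=\sum_{i=t-s+2}^{t}|V_i|$ and $\mathrm{ht}(I(\mathcal{H}))=\sum_{i=1}^{t-s+1}|V_i|$; (e) if $\mathcal{H}$ is $m$-balanced for some $m\geq 1$, then $\mathrm{ht}(I(\mathcal{H}))=m(t-s+1)$ and $\dim(R/I(\mathcal{H}))=m(s-1)$.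
   Context: A complete $s$-uniform $t$-partite hypergraph has vertex set partitioned into nonempty sides $V_1,\ldots,V_t$, and its edges are exactly all $s$-element vertex subsets consisting of one vertex from each of $s$ distinct sides; it is $m$-balanced if $|V_i|=m$ for all $i$. The edge ideal is $I(\mathcal{H})=(\prod_{x\in e}x: e\in\mathcal{H})$. An independent set is a vertex set containing no edge; $\mathrm{Ind}(\mathcal{H})$ is the simplicial complex of independent sets, and $i(\mathcal{H})$ is the maximum size of an independent set. A transversal is a vertex set meeting every edge; $\mathrm{Tr}(\mathcal{H})$ is the set of inclusion-minimal transversals, and $\tau(\mathcal{H})$ is the minimum size of a transversal. *)

theory Defs
  imports Main "HOL-Library.Poly_Mapping" "HOL-Library.Extended_Nat"
begin

definition independent_set :: "'a set set \<Rightarrow> 'a set \<Rightarrow> 'a set \<Rightarrow> bool" where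
  "independent_set H X S \<longleftrightarrow> S \<subseteq> X \<and> (\<forall>e\<in>H. \<not> e \<subseteq> S)"

definition Ind :: "'a set set \<Rightarrow> 'a set \<Rightarrow> 'a set set" where
  "Ind H X = {S. independent_set H X S}"

definition facets :: "'a set set \<Rightarrow> 'a set set" where
  "facets D = {F \<in> D. \<forall>G\<in>D. F \<subseteq> G \<longrightarrow> G = F}"

definition complex_dim :: "'a set set \<Rightarrow> int" where
  "complex_dim D = int (Max (card ` D)) - 1"

definition transversal :: "'a set set \<Rightarrow> 'a set \<Rightarrow> 'a set \<Rightarrow> bool" where
  "transversal H X T \<longleftrightarrow> T \<subseteq> X \<and> (\<forall>e\<in>H. T \<inter> e \<noteq> {})"

definition Tr :: "'a set set \<Rightarrow> 'a set \<Rightarrow> 'a set set" where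
  "Tr H X = {T. transversal H X T \<and> (\<forall>T'. transversal H X T' \<and> T' \<subseteq> T \<longrightarrow> T' = T)}"

definition indep_number :: "'a set set \<Rightarrow> 'a set \<Rightarrow> nat" where
  "indep_number H X = Max {card S | S. independent_set H X S}"

definition transversal_number :: "'a set set \<Rightarrow> 'a set \<Rightarrow> nat" where
  "transversal_number H X = Min {card T | T. transversal H X T}"

text \<open>Complete s-uniform t-partite hypergraph with sides V 1, ..., V t:
  edges are the sets consisting of one vertex from each of s distinct sides.\<close>
definition complete_multipartite_edges :: "(nat \<Rightarrow> 'a set) \<Rightarrow> nat \<Rightarrow> nat \<Rightarrow> 'a set set" where
  "complete_multipartite_edges V t s =
     {f ` I | I f. I \<subseteq> {1..t} \<and> card I = s \<and> (\<forall>i\<in>I. f i \<in> V i)}"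

definition is_partition_into_sides :: "'a set \<Rightarrow> (nat \<Rightarrow> 'a set) \<Rightarrow> nat \<Rightarrow> bool" where
  "is_partition_into_sides X V t \<longleftrightarrow>
     (\<forall>i\<in>{1..t}. V i \<noteq> {}) \<and>
     (\<forall>i\<in>{1..t}. \<forall>j\<in>{1..t}. i \<noteq> j \<longrightarrow> V i \<inter> V j = {}) \<and>
     (\<Union>i\<in>{1..t}. V i) = X"

text \<open>Polynomials over the field 'k in the variables of (finite) type 'a:
  finitely supported maps from monomials (exponent vectors) to coefficients.\<close>
type_synonym ('a, 'k) mpoly = "('a \<Rightarrow>\<^sub>0 nat) \<Rightarrow>\<^sub>0 'k"

definition Var :: "'a \<Rightarrow> ('a, 'k::comm_ring_1) mpoly" where
  "Var x = Poly_Mapping.single (Poly_Mapping.single x 1) 1"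

definition is_ideal :: "'r::comm_ring_1 set \<Rightarrow> bool" where
  "is_ideal I \<longleftrightarrow> 0 \<in> I \<and> (\<forall>a\<in>I. \<forall>b\<in>I. a + b \<in> I) \<and> (\<forall>a\<in>I. \<forall>r. r * a \<in> I)"

definition ideal_gen :: "'r::comm_ring_1 set \<Rightarrow> 'r set" where
  "ideal_gen S = \<Inter> {I. is_ideal I \<and> S \<subseteq> I}"

definition is_prime_ideal :: "'r::comm_ring_1 set \<Rightarrow> bool" where
  "is_prime_ideal P \<longleftrightarrow> is_ideal P \<and> P \<noteq> UNIV \<and> (\<forall>a b. a * b \<in> P \<longrightarrow> a \<in> P \<or> b \<in> P)"

definition prime_chain :: "(nat \<Rightarrow> 'r::comm_ring_1 set) \<Rightarrow> nat \<Rightarrow> bool" where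
  "prime_chain P n \<longleftrightarrow> (\<forall>i\<le>n. is_prime_ideal (P i)) \<and> (\<forall>i<n. P i \<subset> P (Suc i))"

text \<open>Krull dimension of R/I, via the correspondence between prime ideals of R/I
  and prime ideals of R containing I.\<close>
definition krull_dim_quot :: "'r::comm_ring_1 set \<Rightarrow> enat" where
  "krull_dim_quot I = Sup {enat n | n P. prime_chain P n \<and> I \<subseteq> P 0}"

definition prime_height :: "'r::comm_ring_1 set \<Rightarrow> enat" where
  "prime_height Q = Sup {enat n | n P. prime_chain P n \<and> P n = Q}"

definition ideal_height :: "'r::comm_ring_1 set \<Rightarrow> enat" where
  "ideal_height I = Inf {prime_height Q | Q. is_prime_ideal Q \<and> I \<subseteq> Q}"

definition edge_ideal :: "'a set set \<Rightarrow> ('a, 'k::comm_ring_1) mpoly set" where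
  "edge_ideal H = ideal_gen {(\<Prod>x\<in>e. Var x) | e. e \<in> H}"

end

theory Submission
  imports Defs
begin

text \<open>An independent set of \<open>H\<close> meets at most \<open>s - 1\<close> sides, so the facets of \<open>Ind(H)\<close> are the
  unions of \<open>s - 1\<close> whole sides, and their complements, the unions of \<open>t - s + 1\<close> sides, are the
  minimal transversals; with the sides sorted by size this gives \<open>i(H)\<close> and \<open>\<tau>(H)\<close>.

  On the algebraic side, the variables lying in a prime \<open>Q \<supseteq> I(H)\<close> form a transversal \<open>T\<close>,
  and \<open>Q\<close> contains the prime generated by them; adjoining variables one at a time produces chains
  of such monomial primes. Prime chains in \<open>K[x\<^sub>1, \<dots>, x\<^sub>n]\<close> have length at most \<open>n\<close>:
  elements \<open>x\<^sub>i \<in> P\<^sub>i\<^sub>+\<^sub>1 - P\<^sub>i\<close> of a chain admit no monomial relation with unit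
  coefficients modulo \<open>P\<^sub>0\<close>, whereas any \<open>n + 1\<close> polynomials satisfy one, by comparing the
  number of monomials in them with the dimension of a space of polynomials of bounded exponents.
  Hence \<open>dim R/I(H) = n - \<tau>(H) = i(H)\<close> and \<open>ht I(H) = \<tau>(H)\<close>.\<close>

section \<open>Ideals and prime ideals\<close>

lemma is_ideal_ideal_gen: "is_ideal (ideal_gen S)"
  unfolding ideal_gen_def is_ideal_def by auto

lemma ideal_gen_superset: "S \<subseteq> ideal_gen S"
  unfolding ideal_gen_def by auto

lemma ideal_gen_minimal: "is_ideal I \<Longrightarrow> S \<subseteq> I \<Longrightarrow> ideal_gen S \<subseteq> I"
  unfolding ideal_gen_def by auto

lemma ideal_zero: "is_ideal I \<Longrightarrow> 0 \<in> I"
  unfolding is_ideal_def by blast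

lemma ideal_add: "is_ideal I \<Longrightarrow> a \<in> I \<Longrightarrow> b \<in> I \<Longrightarrow> a + b \<in> I"
  unfolding is_ideal_def by blast

lemma ideal_mult_left: "is_ideal I \<Longrightarrow> a \<in> I \<Longrightarrow> r * a \<in> I"
  unfolding is_ideal_def by blast

lemma ideal_mult_right: "is_ideal I \<Longrightarrow> a \<in> I \<Longrightarrow> a * r \<in> I"
  unfolding is_ideal_def by (metis mult.commute)

lemma ideal_add_cancel_right: "is_ideal I \<Longrightarrow> a + b \<in> I \<Longrightarrow> b \<in> I \<Longrightarrow> a \<in> I"
  using ideal_add[of I "a + b" "-1 * b"] ideal_mult_left[of I b "-1"] by simp

lemma ideal_sum: "is_ideal I \<Longrightarrow> (\<And>x. x \<in> X \<Longrightarrow> f x \<in> I) \<Longrightarrow> sum f X \<in> I"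
  by (induction X rule: infinite_finite_induct) (auto intro: ideal_zero ideal_add)

lemma prime_ideal_is_ideal: "is_prime_ideal P \<Longrightarrow> is_ideal P"
  unfolding is_prime_ideal_def by blast

lemma prime_ideal_unit_notin:
  assumes "is_prime_ideal P" and "u dvd 1"
  shows "u \<notin> P"
proof
  assume "u \<in> P"
  obtain w where "1 = u * w" using \<open>u dvd 1\<close> by (rule dvdE)
  then have "1 \<in> P" using ideal_mult_right[OF prime_ideal_is_ideal[OF assms(1)] \<open>u \<in> P\<close>] by metis
  then have "r \<in> P" for r using ideal_mult_right[OF prime_ideal_is_ideal[OF assms(1)], of 1 r] by simp
  then show False using assms(1) unfolding is_prime_ideal_def by blast
qed

lemma prime_ideal_mult_notin: "is_prime_ideal P \<Longrightarrow> a \<notin> P \<Longrightarrow> b \<notin> P \<Longrightarrow> a * b \<notin> P"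
  unfolding is_prime_ideal_def by auto

lemma prime_ideal_power_notin: "is_prime_ideal P \<Longrightarrow> a \<notin> P \<Longrightarrow> a ^ m \<notin> P"
  by (induction m) (simp_all add: prime_ideal_unit_notin prime_ideal_mult_notin)

lemma prime_ideal_prod_in:
  assumes "finite X" and "is_prime_ideal P" and "prod f X \<in> P"
  obtains x where "x \<in> X" and "f x \<in> P"
  using assms
proof (induction X rule: finite_induct)
  case empty
  then show ?case by (simp add: prime_ideal_unit_notin)
next
  case (insert x X)
  then show ?case unfolding is_prime_ideal_def by auto
qed

section \<open>Monomials in the members of a prime chain\<close>

fun list_monomial :: "(nat \<Rightarrow> 'r::comm_ring_1) \<Rightarrow> nat list \<Rightarrow> 'r" where
  "list_monomial x [] = 1"
| "list_monomial x (a # as) = x 0 ^ a * list_monomial (\<lambda>i. x (Suc i)) as"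

lemma list_monomial_sum_factor:
  fixes x :: "nat \<Rightarrow> 'r::comm_ring_1"
  assumes fin: "finite M" and nonempty: "\<forall>\<alpha>\<in>M. \<alpha> \<noteq> []" and min: "\<forall>\<alpha>\<in>M. m \<le> hd \<alpha>"
  shows "\<exists>r. (\<Sum>\<alpha>\<in>M. c \<alpha> * list_monomial x \<alpha>) =
    x 0 ^ m * ((\<Sum>\<beta>\<in>{\<beta>. m # \<beta> \<in> M}. c (m # \<beta>) * list_monomial (\<lambda>i. x (Suc i)) \<beta>) + x 0 * r)"
proof -
  define x' where "x' = (\<lambda>i. x (Suc i))"
  define M1 where "M1 = {\<alpha>\<in>M. hd \<alpha> \<noteq> m}"
  have cons: "\<alpha> = hd \<alpha> # tl \<alpha>" if "\<alpha> \<in> M" for \<alpha>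
    using nonempty that by simp
  have split: "M = Cons m ` {\<beta>. m # \<beta> \<in> M} \<union> M1" "Cons m ` {\<beta>. m # \<beta> \<in> M} \<inter> M1 = {}"
  proof -
    have "\<alpha> \<in> Cons m ` {\<beta>. m # \<beta> \<in> M}" if "\<alpha> \<in> M" "hd \<alpha> = m" for \<alpha>
      using cons[OF that(1)] that by (metis (mono_tags, lifting) image_eqI mem_Collect_eq)
    then show "M = Cons m ` {\<beta>. m # \<beta> \<in> M} \<union> M1" unfolding M1_def by blast
    show "Cons m ` {\<beta>. m # \<beta> \<in> M} \<inter> M1 = {}" unfolding M1_def by auto
  qed
  have head_part: "(\<Sum>\<alpha>\<in>Cons m ` {\<beta>. m # \<beta> \<in> M}. c \<alpha> * list_monomial x \<alpha>)
      = x 0 ^ m * (\<Sum>\<beta>\<in>{\<beta>. m # \<beta> \<in> M}. c (m # \<beta>) * list_monomial x' \<beta>)"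
    by (subst sum.reindex) (auto simp: inj_on_def sum_distrib_left mult_ac x'_def)
  have "c \<alpha> * list_monomial x \<alpha> = x 0 ^ m * (x 0 * (c \<alpha> * x 0 ^ (hd \<alpha> - m - 1) * list_monomial x' (tl \<alpha>)))"
    if "\<alpha> \<in> M1" for \<alpha>
  proof -
    have \<alpha>: "\<alpha> \<in> M" "m < hd \<alpha>" using that min unfolding M1_def by auto
    then have "hd \<alpha> = m + Suc (hd \<alpha> - m - 1)" by simp
    then have "x 0 ^ hd \<alpha> = x 0 ^ m * (x 0 * x 0 ^ (hd \<alpha> - m - 1))"
      using power_add[of "x 0" m "Suc (hd \<alpha> - m - 1)"] by simp
    moreover have "list_monomial x \<alpha> = x 0 ^ hd \<alpha> * list_monomial x' (tl \<alpha>)"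
      using cons[OF \<alpha>(1)] list_monomial.simps(2)[of x "hd \<alpha>" "tl \<alpha>"] unfolding x'_def by simp
    ultimately show ?thesis by (simp add: mult_ac)
  qed
  then have "(\<Sum>\<alpha>\<in>M1. c \<alpha> * list_monomial x \<alpha>)
      = x 0 ^ m * (x 0 * (\<Sum>\<alpha>\<in>M1. c \<alpha> * x 0 ^ (hd \<alpha> - m - 1) * list_monomial x' (tl \<alpha>)))"
    by (simp add: sum_distrib_left)
  moreover have "(\<Sum>\<alpha>\<in>M. c \<alpha> * list_monomial x \<alpha>) = (\<Sum>\<alpha>\<in>Cons m ` {\<beta>. m # \<beta> \<in> M}. c \<alpha> * list_monomial x \<alpha>)
      + (\<Sum>\<alpha>\<in>M1. c \<alpha> * list_monomial x \<alpha>)"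
  proof -
    have "finite (Cons m ` {\<beta>. m # \<beta> \<in> M})" "finite M1"
      by (rule finite_subset[OF _ fin], auto simp: M1_def)+
    from sum.union_disjoint[OF this split(2)] show ?thesis by (simp only: split(1)[symmetric])
  qed
  ultimately show ?thesis
    using head_part unfolding x'_def by (simp add: distrib_left) blast
qed

text \<open>Factor out the least power of \<open>x 0\<close>; modulo \<open>x 0 \<in> P 1\<close> the remaining factor is a
  combination of monomials in \<open>x 1, x 2, \<dots>\<close>, which avoids \<open>P 1\<close> by induction.\<close>
lemma prime_chain_monomial_sum_notin:
  fixes x :: "nat \<Rightarrow> 'r::comm_ring_1"
  assumes "finite M" and "M \<noteq> {}" and "\<forall>\<alpha>\<in>M. length \<alpha> = k \<and> c \<alpha> dvd 1"
    and "\<forall>i\<le>k. is_prime_ideal (P i)"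
    and "\<forall>i<k. P i \<subseteq> P (Suc i) \<and> x i \<in> P (Suc i) \<and> x i \<notin> P i"
  shows "(\<Sum>\<alpha>\<in>M. c \<alpha> * list_monomial x \<alpha>) \<notin> P 0"
  using assms
proof (induction k arbitrary: M c P x)
  case 0
  then have "M = {[]}" by auto
  then show ?case using 0 by (simp add: prime_ideal_unit_notin)
next
  case (Suc k)
  define m where "m = Min (hd ` M)"
  define M0 where "M0 = {\<beta>. m # \<beta> \<in> M}"
  have nonempty: "\<forall>\<alpha>\<in>M. \<alpha> \<noteq> []" using Suc.prems(3) by auto
  have "\<forall>\<alpha>\<in>M. m \<le> hd \<alpha>" using Suc.prems(1) unfolding m_def by simp
  then obtain r where sum_eq: "(\<Sum>\<alpha>\<in>M. c \<alpha> * list_monomial x \<alpha>) =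
      x 0 ^ m * ((\<Sum>\<beta>\<in>M0. c (m # \<beta>) * list_monomial (\<lambda>i. x (Suc i)) \<beta>) + x 0 * r)"
    using list_monomial_sum_factor[OF Suc.prems(1) nonempty] unfolding M0_def by blast
  have "m \<in> hd ` M" using Suc.prems(1,2) unfolding m_def by simp
  then obtain \<alpha> where "\<alpha> \<in> M" "hd \<alpha> = m" by blast
  then have "tl \<alpha> \<in> M0" using nonempty unfolding M0_def by (metis list.collapse mem_Collect_eq)
  then have "M0 \<noteq> {}" by blast
  moreover have "finite M0"
    using finite_vimageI[OF Suc.prems(1), of "Cons m"] unfolding M0_def vimage_def by simp
  moreover have "\<forall>\<beta>\<in>M0. length \<beta> = k \<and> c (m # \<beta>) dvd 1"
    using Suc.prems(3) unfolding M0_def by auto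
  moreover have "\<forall>i\<le>k. is_prime_ideal (P (Suc i))"
    and "\<forall>i<k. P (Suc i) \<subseteq> P (Suc (Suc i)) \<and> x (Suc i) \<in> P (Suc (Suc i)) \<and> x (Suc i) \<notin> P (Suc i)"
    using Suc.prems(4,5) by auto
  ultimately have tail_notin: "(\<Sum>\<beta>\<in>M0. c (m # \<beta>) * list_monomial (\<lambda>i. x (Suc i)) \<beta>) \<notin> P 1"
    using Suc.IH[of M0 "\<lambda>\<beta>. c (m # \<beta>)" "\<lambda>i. P (Suc i)" "\<lambda>i. x (Suc i)"] by simp
  have prime0: "is_prime_ideal (P 0)" and ideal1: "is_ideal (P 1)"
    using Suc.prems(4) prime_ideal_is_ideal by auto
  have x0: "x 0 \<in> P 1" "x 0 \<notin> P 0" "P 0 \<subseteq> P 1" using Suc.prems(5) by auto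
  have "(\<Sum>\<beta>\<in>M0. c (m # \<beta>) * list_monomial (\<lambda>i. x (Suc i)) \<beta>) + x 0 * r \<notin> P 1"
    using tail_notin ideal_add_cancel_right[OF ideal1] ideal_mult_right[OF ideal1 x0(1)] by blast
  then have "(\<Sum>\<beta>\<in>M0. c (m # \<beta>) * list_monomial (\<lambda>i. x (Suc i)) \<beta>) + x 0 * r \<notin> P 0"
    using x0(3) by blast
  then show ?case
    unfolding sum_eq using prime_ideal_mult_notin[OF prime0] prime_ideal_power_notin[OF prime0 x0(2)] by blast
qed

section \<open>Polynomial rings over finitely many variables\<close>

lemma lookup_mult_at_maximal_keys:
  fixes p q :: "'m::comm_monoid_add \<Rightarrow>\<^sub>0 'b::ring"
    and emb :: "'m \<Rightarrow> 'o::{ordered_cancel_comm_monoid_add, linorder}"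
  assumes emb_add: "\<And>u v. emb (u + v) = emb u + emb v" and emb_inj: "inj emb"
    and a: "\<And>u. u \<in> Poly_Mapping.keys p \<Longrightarrow> u \<noteq> a \<Longrightarrow> emb u < emb a"
    and b: "\<And>v. v \<in> Poly_Mapping.keys q \<Longrightarrow> v \<noteq> b \<Longrightarrow> emb v < emb b"
  shows "Poly_Mapping.lookup (p * q) (a + b) = Poly_Mapping.lookup p a * Poly_Mapping.lookup q b"
proof -
  define p' where "p' = p - Poly_Mapping.single a (Poly_Mapping.lookup p a)"
  define q' where "q' = q - Poly_Mapping.single b (Poly_Mapping.lookup q b)"
  have p': "emb u < emb a" if "u \<in> Poly_Mapping.keys p'" for u
  proof -
    have "u \<in> Poly_Mapping.keys p" "u \<noteq> a"
      using that unfolding p'_def by (auto simp: lookup_minus lookup_single in_keys_iff when_def split: if_splits)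
    then show ?thesis by (rule a)
  qed
  have q': "emb v < emb b" if "v \<in> Poly_Mapping.keys q'" for v
  proof -
    have "v \<in> Poly_Mapping.keys q" "v \<noteq> b"
      using that unfolding q'_def by (auto simp: lookup_minus lookup_single in_keys_iff when_def split: if_splits)
    then show ?thesis by (rule b)
  qed
  have "p * q = Poly_Mapping.single a (Poly_Mapping.lookup p a) * Poly_Mapping.single b (Poly_Mapping.lookup q b) + Poly_Mapping.single a (Poly_Mapping.lookup p a) * q'
      + p' * Poly_Mapping.single b (Poly_Mapping.lookup q b) + p' * q'"
    unfolding p'_def q'_def by (simp add: algebra_simps)
  also have "Poly_Mapping.single a (Poly_Mapping.lookup p a) * Poly_Mapping.single b (Poly_Mapping.lookup q b) = Poly_Mapping.single (a + b) (Poly_Mapping.lookup p a * Poly_Mapping.lookup q b)"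
    by (rule mult_single)
  finally have decomp: "p * q = Poly_Mapping.single (a + b) (Poly_Mapping.lookup p a * Poly_Mapping.lookup q b) + Poly_Mapping.single a (Poly_Mapping.lookup p a) * q'
      + p' * Poly_Mapping.single b (Poly_Mapping.lookup q b) + p' * q'" .
  have "a + b \<notin> Poly_Mapping.keys (Poly_Mapping.single a (Poly_Mapping.lookup p a) * q')"
  proof
    assume "a + b \<in> Poly_Mapping.keys (Poly_Mapping.single a (Poly_Mapping.lookup p a) * q')"
    then obtain v where "v \<in> Poly_Mapping.keys q'" "a + b = a + v"
      using keys_mult[of "Poly_Mapping.single a (Poly_Mapping.lookup p a)" q'] by (auto split: if_splits)
    then show False using q'[of v] emb_add[of a b] emb_add[of a v] by simp
  qed
  moreover have "a + b \<notin> Poly_Mapping.keys (p' * Poly_Mapping.single b (Poly_Mapping.lookup q b))"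
  proof
    assume "a + b \<in> Poly_Mapping.keys (p' * Poly_Mapping.single b (Poly_Mapping.lookup q b))"
    then obtain u where "u \<in> Poly_Mapping.keys p'" "a + b = u + b"
      using keys_mult[of p' "Poly_Mapping.single b (Poly_Mapping.lookup q b)"] by (auto split: if_splits)
    then show False using p'[of u] emb_add[of a b] emb_add[of u b] by simp
  qed
  moreover have "a + b \<notin> Poly_Mapping.keys (p' * q')"
  proof
    assume "a + b \<in> Poly_Mapping.keys (p' * q')"
    then obtain u v where uv: "u \<in> Poly_Mapping.keys p'" "v \<in> Poly_Mapping.keys q'" "a + b = u + v"
      using keys_mult[of p' q'] by auto
    have "emb u + emb v < emb a + emb b" using add_strict_mono[OF p'[OF uv(1)] q'[OF uv(2)]] .
    then show False using uv(3) emb_add[of a b] emb_add[of u v] by simp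
  qed
  ultimately show ?thesis unfolding decomp by (simp add: lookup_add in_keys_iff)
qed

lemma keys_maximal_obtain:
  fixes p :: "'m \<Rightarrow>\<^sub>0 'b::zero" and emb :: "'m \<Rightarrow> 'o::linorder"
  assumes "inj emb" and "p \<noteq> 0"
  obtains a where "a \<in> Poly_Mapping.keys p" and "\<And>u. u \<in> Poly_Mapping.keys p \<Longrightarrow> u \<noteq> a \<Longrightarrow> emb u < emb a"
proof -
  have "Max (emb ` Poly_Mapping.keys p) \<in> emb ` Poly_Mapping.keys p"
    using \<open>p \<noteq> 0\<close> by (intro Max_in) simp_all
  then obtain a where a: "a \<in> Poly_Mapping.keys p" "emb a = Max (emb ` Poly_Mapping.keys p)"
    by (metis imageE)
  have "emb u < emb a" if "u \<in> Poly_Mapping.keys p" "u \<noteq> a" for u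
  proof -
    have "emb u \<le> emb a" using that(1) a(2) by simp
    moreover have "emb u \<noteq> emb a" using that(2) injD[OF \<open>inj emb\<close>] by blast
    ultimately show ?thesis by simp
  qed
  with a(1) show ?thesis by (rule that)
qed

lemma mult_ne_zero_if_additive_embedding:
  fixes p q :: "'m::comm_monoid_add \<Rightarrow>\<^sub>0 'b::ring_no_zero_divisors"
    and emb :: "'m \<Rightarrow> 'o::{ordered_cancel_comm_monoid_add, linorder}"
  assumes "\<And>u v. emb (u + v) = emb u + emb v" and "inj emb" and "p \<noteq> 0" and "q \<noteq> 0"
  shows "p * q \<noteq> 0"
proof -
  obtain a where a: "a \<in> Poly_Mapping.keys p" "\<And>u. u \<in> Poly_Mapping.keys p \<Longrightarrow> u \<noteq> a \<Longrightarrow> emb u < emb a"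
    using keys_maximal_obtain[OF \<open>inj emb\<close> \<open>p \<noteq> 0\<close>] by blast
  obtain b where b: "b \<in> Poly_Mapping.keys q" "\<And>v. v \<in> Poly_Mapping.keys q \<Longrightarrow> v \<noteq> b \<Longrightarrow> emb v < emb b"
    using keys_maximal_obtain[OF \<open>inj emb\<close> \<open>q \<noteq> 0\<close>] by blast
  have "Poly_Mapping.lookup (p * q) (a + b) = Poly_Mapping.lookup p a * Poly_Mapping.lookup q b"
    using lookup_mult_at_maximal_keys[OF assms(1,2) a(2) b(2)] .
  also have "\<dots> \<noteq> 0" using a(1) b(1) by (simp add: in_keys_iff)
  finally show ?thesis by auto
qed

text \<open>The monomials over a finite type embed additively into those over \<open>nat\<close>, which are
  linearly ordered; this stands in for a monomial order.\<close>
lemma mpoly_mult_ne_zero: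
  fixes p q :: "('a::finite, 'k::field) mpoly"
  assumes "p \<noteq> 0" and "q \<noteq> 0"
  shows "p * q \<noteq> 0"
proof -
  obtain es :: "'a list" where es: "set es = UNIV"
    using finite_list[OF finite_UNIV] by blast
  define emb :: "('a \<Rightarrow>\<^sub>0 nat) \<Rightarrow> (nat \<Rightarrow>\<^sub>0 nat)" where
    "emb \<mu> = Abs_poly_mapping (\<lambda>i. if i < length es then Poly_Mapping.lookup \<mu> (es ! i) else 0)" for \<mu>
  have lookup_emb: "Poly_Mapping.lookup (emb \<mu>) i = (if i < length es then Poly_Mapping.lookup \<mu> (es ! i) else 0)" for \<mu> i
  proof -
    have "finite {i. (if i < length es then Poly_Mapping.lookup \<mu> (es ! i) else 0) \<noteq> 0}"
      by (rule finite_subset[of _ "{..<length es}"]) auto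
    then show ?thesis unfolding emb_def by simp
  qed
  have "emb (\<mu> + \<nu>) = emb \<mu> + emb \<nu>" for \<mu> \<nu>
    by (rule poly_mapping_eqI) (simp add: lookup_emb lookup_add)
  moreover have "inj emb"
  proof (rule injI, rule poly_mapping_eqI)
    fix \<mu> \<nu> v assume "emb \<mu> = emb \<nu>"
    moreover obtain i where "i < length es" "es ! i = v" using es by (metis UNIV_I in_set_conv_nth)
    ultimately show "Poly_Mapping.lookup \<mu> v = Poly_Mapping.lookup \<nu> v" by (metis lookup_emb)
  qed
  ultimately show ?thesis using mult_ne_zero_if_additive_embedding assms by blast
qed

lemma poly_mapping_sum_single_keys:
  "p = (\<Sum>\<mu>\<in>Poly_Mapping.keys p. Poly_Mapping.single \<mu> (Poly_Mapping.lookup p \<mu>))"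
  by (rule poly_mapping_eqI) (simp add: lookup_sum lookup_single when_def in_keys_iff)

lemma keys_Var: "Poly_Mapping.keys (Var v :: ('a, 'k::comm_ring_1) mpoly) = {Poly_Mapping.single v 1}"
  unfolding Var_def by simp

definition var_ideal :: "'a set \<Rightarrow> ('a, 'k::comm_ring_1) mpoly set" where
  "var_ideal A = {p. \<forall>\<mu>\<in>Poly_Mapping.keys p. \<exists>v\<in>A. 0 < Poly_Mapping.lookup \<mu> v}"

lemma is_ideal_var_ideal: "is_ideal (var_ideal A :: ('a, 'k::comm_ring_1) mpoly set)"
  unfolding is_ideal_def
proof (intro conjI ballI allI)
  show "0 \<in> var_ideal A" unfolding var_ideal_def by simp
next
  fix a b :: "('a, 'k) mpoly" assume "a \<in> var_ideal A" "b \<in> var_ideal A"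
  then show "a + b \<in> var_ideal A" unfolding var_ideal_def using keys_add[of a b] by blast
next
  fix a r :: "('a, 'k) mpoly" assume a: "a \<in> var_ideal A"
  show "r * a \<in> var_ideal A" unfolding var_ideal_def mem_Collect_eq
  proof
    fix \<mu> assume "\<mu> \<in> Poly_Mapping.keys (r * a)"
    then obtain \<nu> \<kappa> where "\<mu> = \<nu> + \<kappa>" "\<kappa> \<in> Poly_Mapping.keys a" using keys_mult[of r a] by auto
    then show "\<exists>v\<in>A. 0 < Poly_Mapping.lookup \<mu> v" using a unfolding var_ideal_def by (auto simp: lookup_add)
  qed
qed

lemma Var_in_var_ideal_iff: "Var v \<in> var_ideal A \<longleftrightarrow> v \<in> A"
  unfolding var_ideal_def by (auto simp: keys_Var lookup_single when_def)

lemma var_ideal_mono: "A \<subseteq> B \<Longrightarrow> var_ideal A \<subseteq> var_ideal B"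
  unfolding var_ideal_def by blast

lemma var_ideal_eq_ideal_gen: "(var_ideal A :: ('a, 'k::comm_ring_1) mpoly set) = ideal_gen (Var ` A)"
proof
  show "ideal_gen (Var ` A) \<subseteq> (var_ideal A :: ('a, 'k) mpoly set)"
    by (rule ideal_gen_minimal[OF is_ideal_var_ideal]) (auto simp: Var_in_var_ideal_iff)
next
  show "(var_ideal A :: ('a, 'k) mpoly set) \<subseteq> ideal_gen (Var ` A)"
  proof
    fix p :: "('a, 'k) mpoly" assume p: "p \<in> var_ideal A"
    have monomial_in: "Poly_Mapping.single \<mu> (Poly_Mapping.lookup p \<mu>) \<in> ideal_gen (Var ` A)"
      if \<mu>: "\<mu> \<in> Poly_Mapping.keys p" for \<mu>
    proof -
      obtain v where v: "v \<in> A" "0 < Poly_Mapping.lookup \<mu> v" using p \<mu> unfolding var_ideal_def by auto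
      have "(\<mu> - Poly_Mapping.single v 1) + Poly_Mapping.single v 1 = \<mu>"
        by (rule poly_mapping_eqI) (use v in \<open>auto simp: lookup_add lookup_minus lookup_single when_def\<close>)
      then have "Poly_Mapping.single \<mu> (Poly_Mapping.lookup p \<mu>)
          = Poly_Mapping.single (\<mu> - Poly_Mapping.single v 1) (Poly_Mapping.lookup p \<mu>) * Var v"
        unfolding Var_def mult_single by simp
      moreover have "Var v \<in> ideal_gen (Var ` A)" using ideal_gen_superset v(1) by blast
      ultimately show ?thesis using ideal_mult_left[OF is_ideal_ideal_gen] by simp
    qed
    have "(\<Sum>\<mu>\<in>Poly_Mapping.keys p. Poly_Mapping.single \<mu> (Poly_Mapping.lookup p \<mu>)) \<in> ideal_gen (Var ` A)"
      by (rule ideal_sum[OF is_ideal_ideal_gen monomial_in])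
    then show "p \<in> ideal_gen (Var ` A)"
      by (simp only: poly_mapping_sum_single_keys[of p, symmetric])
  qed
qed

definition free_part :: "'a set \<Rightarrow> ('a, 'k::comm_ring_1) mpoly \<Rightarrow> ('a, 'k) mpoly" where
  "free_part A = Poly_Mapping.mapp (\<lambda>\<mu> c. if \<forall>v\<in>A. Poly_Mapping.lookup \<mu> v = 0 then c else 0)"

lemma keys_free_part:
  "\<mu> \<in> Poly_Mapping.keys (free_part A p) \<Longrightarrow> \<forall>v\<in>A. Poly_Mapping.lookup \<mu> v = 0"
  unfolding free_part_def by (auto simp: in_keys_iff lookup_mapp when_def split: if_splits)

lemma diff_free_part_in_var_ideal: "p - free_part A p \<in> var_ideal A"
  unfolding var_ideal_def free_part_def
  by (auto simp: in_keys_iff lookup_minus lookup_mapp when_def split: if_splits)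

lemma in_var_ideal_if_free_part_eq_0: "free_part A p = 0 \<Longrightarrow> p \<in> var_ideal A"
  using diff_free_part_in_var_ideal[of p A] by simp

lemma free_part_mult_notin_var_ideal:
  assumes "free_part A p * free_part A q \<noteq> 0"
  shows "free_part A p * free_part A q \<notin> var_ideal A"
proof
  obtain \<mu> where "\<mu> \<in> Poly_Mapping.keys (free_part A p * free_part A q)"
    using assms by fastforce
  then obtain \<nu> \<kappa> where "\<mu> = \<nu> + \<kappa>" "\<nu> \<in> Poly_Mapping.keys (free_part A p)" "\<kappa> \<in> Poly_Mapping.keys (free_part A q)"
    using keys_mult by blast
  then have "\<forall>v\<in>A. Poly_Mapping.lookup \<mu> v = 0" using keys_free_part by (fastforce simp: lookup_add)
  moreover assume "free_part A p * free_part A q \<in> var_ideal A"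
  ultimately show False
    using \<open>\<mu> \<in> _\<close> unfolding var_ideal_def by fastforce
qed

text \<open>Modulo \<open>var_ideal A\<close>, \<open>p * q\<close> agrees with the product of the free parts, which is nonzero
  when both factors lie outside \<open>var_ideal A\<close> and then has a monomial avoiding \<open>A\<close>.\<close>
lemma is_prime_ideal_var_ideal: "is_prime_ideal (var_ideal A :: ('a::finite, 'k::field) mpoly set)"
proof -
  have "1 \<notin> (var_ideal A :: ('a, 'k) mpoly set)" unfolding var_ideal_def by simp
  moreover have "p \<in> var_ideal A \<or> q \<in> var_ideal A" if pq: "p * q \<in> var_ideal A" for p q :: "('a, 'k) mpoly"
  proof (rule ccontr)
    assume "\<not> (p \<in> var_ideal A \<or> q \<in> var_ideal A)"
    then have "free_part A p * free_part A q \<noteq> 0"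
      using mpoly_mult_ne_zero in_var_ideal_if_free_part_eq_0 by metis
    then have notin: "free_part A p * free_part A q \<notin> var_ideal A"
      by (rule free_part_mult_notin_var_ideal)
    have "p * q = free_part A p * free_part A q
        + (free_part A p * (q - free_part A q) + (p - free_part A p) * q)"
      by (simp add: algebra_simps)
    moreover have "free_part A p * (q - free_part A q) + (p - free_part A p) * q \<in> var_ideal A"
      using is_ideal_var_ideal diff_free_part_in_var_ideal
      by (metis ideal_add ideal_mult_left ideal_mult_right)
    ultimately show False
      using notin pq ideal_add_cancel_right[OF is_ideal_var_ideal] by metis
  qed
  ultimately show ?thesis unfolding is_prime_ideal_def using is_ideal_var_ideal by blast
qed

section \<open>Length of prime chains in a polynomial ring\<close>

context vector_space
begin

lemma family_relation_if_card_gt_span: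
  assumes "finite L" and "finite B" and "f ` L \<subseteq> span B" and "card B < card L"
  obtains M c where "M \<subseteq> L" and "M \<noteq> {}" and "\<forall>\<alpha>\<in>M. c \<alpha> \<noteq> 0" and "(\<Sum>\<alpha>\<in>M. c \<alpha> *s f \<alpha>) = 0"
proof (cases "inj_on f L")
  case False
  then obtain \<alpha> \<beta> where "\<alpha> \<in> L" "\<beta> \<in> L" "\<alpha> \<noteq> \<beta>" "f \<alpha> = f \<beta>"
    unfolding inj_on_def by blast
  then show ?thesis
    by (intro that[of "{\<alpha>, \<beta>}" "\<lambda>\<gamma>. if \<gamma> = \<alpha> then 1 else -1"]) (auto simp: scale_minus_left)
next
  case True
  have "dependent (f ` L)"
    using independent_span_bound[OF assms(2) _ assms(3)] assms(4) card_image[OF True] by auto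
  then obtain T u where T: "finite T" "T \<subseteq> f ` L" "(\<Sum>v\<in>T. u v *s v) = 0" "\<exists>v\<in>T. u v \<noteq> 0"
    unfolding dependent_explicit by blast
  define M where "M = {\<alpha>\<in>L. f \<alpha> \<in> T \<and> u (f \<alpha>) \<noteq> 0}"
  have image_M: "f ` M = {v\<in>T. u v \<noteq> 0}" unfolding M_def using T(2) by blast
  have "inj_on f M" using True unfolding M_def by (rule inj_on_subset) auto
  then have "(\<Sum>\<alpha>\<in>M. u (f \<alpha>) *s f \<alpha>) = (\<Sum>v\<in>f ` M. u v *s v)"
    by (simp add: sum.reindex)
  also have "\<dots> = (\<Sum>v\<in>T. u v *s v)"
    unfolding image_M by (rule sum.mono_neutral_left) (use T(1) in auto)
  finally have "(\<Sum>\<alpha>\<in>M. u (f \<alpha>) *s f \<alpha>) = (\<Sum>v\<in>T. u v *s v)" .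
  then show ?thesis
    using T(2-4) by (intro that[of M "u \<circ> f"]) (auto simp: M_def)
qed

end

interpretation mpoly_vs: vector_space "\<lambda>(c::'k::field) (p::('a, 'k) mpoly). Poly_Mapping.single 0 c * p"
  by unfold_locales (simp_all add: distrib_left distrib_right single_add mult.assoc[symmetric] mult_single)

definition exps_le :: "nat \<Rightarrow> ('a, 'k::zero) mpoly \<Rightarrow> bool" where
  "exps_le N p \<longleftrightarrow> (\<forall>\<mu>\<in>Poly_Mapping.keys p. \<forall>v. Poly_Mapping.lookup \<mu> v \<le> N)"

lemma exps_le_mono: "exps_le N p \<Longrightarrow> N \<le> N' \<Longrightarrow> exps_le N' p"
  unfolding exps_le_def by (meson order_trans)

lemma exps_le_mult:
  assumes "exps_le a p" and "exps_le b q"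
  shows "exps_le (a + b) (p * q)"
  unfolding exps_le_def
proof (intro ballI allI)
  fix \<mu> v assume "\<mu> \<in> Poly_Mapping.keys (p * q)"
  then obtain \<nu> \<kappa> where "\<mu> = \<nu> + \<kappa>" "\<nu> \<in> Poly_Mapping.keys p" "\<kappa> \<in> Poly_Mapping.keys q"
    using keys_mult[of p q] by blast
  then show "Poly_Mapping.lookup \<mu> v \<le> a + b"
    using assms unfolding exps_le_def by (simp add: lookup_add add_mono)
qed

lemma exps_le_power: "exps_le a p \<Longrightarrow> exps_le (m * a) (p ^ m)"
proof (induction m)
  case 0
  then show ?case by (simp add: exps_le_def)
next
  case (Suc m)
  then show ?case using exps_le_mult[of a p "m * a" "p ^ m"] by simp
qed

lemma exps_le_exists: "\<exists>N. exps_le N (p :: ('a::finite, 'k::zero) mpoly)"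
proof
  show "exps_le (\<Sum>\<mu>\<in>Poly_Mapping.keys p. \<Sum>v\<in>UNIV. Poly_Mapping.lookup \<mu> v) p"
    unfolding exps_le_def
  proof (intro ballI allI)
    fix \<mu> v assume "\<mu> \<in> Poly_Mapping.keys p"
    have "Poly_Mapping.lookup \<mu> v \<le> (\<Sum>v\<in>UNIV. Poly_Mapping.lookup \<mu> v)"
      by (rule member_le_sum) auto
    also have "\<dots> \<le> (\<Sum>\<mu>\<in>Poly_Mapping.keys p. \<Sum>v\<in>UNIV. Poly_Mapping.lookup \<mu> v)"
      using \<open>\<mu> \<in> _\<close> by (intro member_le_sum) auto
    finally show "Poly_Mapping.lookup \<mu> v \<le> \<dots>" .
  qed
qed

lemma exps_le_list_monomial:
  "(\<forall>i<length \<alpha>. exps_le E (y i)) \<Longrightarrow> exps_le (E * sum_list \<alpha>) (list_monomial y \<alpha>)"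
proof (induction \<alpha> arbitrary: y)
  case Nil
  then show ?case by (simp add: exps_le_def)
next
  case (Cons a as)
  have "exps_le (E * sum_list as) (list_monomial (\<lambda>i. y (Suc i)) as)" using Cons by auto
  moreover have "exps_le (a * E) (y 0 ^ a)" using Cons.prems exps_le_power by auto
  ultimately have "exps_le (a * E + E * sum_list as) (y 0 ^ a * list_monomial (\<lambda>i. y (Suc i)) as)"
    using exps_le_mult by blast
  then show ?case by (simp add: algebra_simps)
qed

definition monomials_exps_le :: "nat \<Rightarrow> ('a, 'k::{zero, one}) mpoly set" where
  "monomials_exps_le N = (\<lambda>\<mu>. Poly_Mapping.single \<mu> 1) ` {\<mu>. \<forall>v. Poly_Mapping.lookup \<mu> v \<le> N}"

lemma exps_le_in_span: "exps_le N p \<Longrightarrow> p \<in> mpoly_vs.span (monomials_exps_le N)"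
proof -
  assume N: "exps_le N p"
  have "(\<Sum>\<mu>\<in>Poly_Mapping.keys p. Poly_Mapping.single 0 (Poly_Mapping.lookup p \<mu>) * Poly_Mapping.single \<mu> 1)
      \<in> mpoly_vs.span (monomials_exps_le N)"
  proof (rule mpoly_vs.span_sum)
    fix \<mu> assume "\<mu> \<in> Poly_Mapping.keys p"
    then have "Poly_Mapping.single \<mu> 1 \<in> monomials_exps_le N"
      using N unfolding exps_le_def monomials_exps_le_def by auto
    then show "Poly_Mapping.single 0 (Poly_Mapping.lookup p \<mu>) * Poly_Mapping.single \<mu> 1
        \<in> mpoly_vs.span (monomials_exps_le N)"
      using mpoly_vs.span_base mpoly_vs.span_scale by blast
  qed
  then show ?thesis
    by (simp add: mult_single flip: poly_mapping_sum_single_keys)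
qed

lemma card_monomials_exps_le:
  "finite (monomials_exps_le N :: ('a::finite, 'k::zero_neq_one) mpoly set)
   \<and> card (monomials_exps_le N :: ('a, 'k) mpoly set) \<le> (N + 1) ^ card (UNIV :: 'a set)"
proof -
  obtain es :: "'a list" where es: "distinct es" "set es = UNIV"
    using finite_distinct_list[OF finite_UNIV] by blast
  define Mon where "Mon = {\<mu> :: 'a \<Rightarrow>\<^sub>0 nat. \<forall>v. Poly_Mapping.lookup \<mu> v \<le> N}"
  define Ls where "Ls = {xs. set xs \<subseteq> {..N} \<and> length xs = card (UNIV :: 'a set)}"
  have "inj_on (\<lambda>\<mu>. map (Poly_Mapping.lookup \<mu>) es) Mon"
    using es(2) by (intro inj_onI poly_mapping_eqI) (auto simp: map_eq_conv)
  moreover have "(\<lambda>\<mu>. map (Poly_Mapping.lookup \<mu>) es) ` Mon \<subseteq> Ls"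
    unfolding Mon_def Ls_def using es distinct_card by fastforce
  moreover have "finite Ls" "card Ls = (N + 1) ^ card (UNIV :: 'a set)"
    unfolding Ls_def by (simp_all add: finite_lists_length_eq card_lists_length_eq)
  ultimately have "finite Mon" "card Mon \<le> (N + 1) ^ card (UNIV :: 'a set)"
    using finite_imageD finite_subset card_inj_on_le by metis+
  moreover have "card (monomials_exps_le N :: ('a, 'k) mpoly set) \<le> card Mon"
    unfolding monomials_exps_le_def Mon_def[symmetric] by (rule card_image_le) fact
  ultimately show ?thesis
    unfolding monomials_exps_le_def Mon_def[symmetric] by simp
qed

text \<open>Exponent lists with entries up to \<open>D\<close> give \<open>(D + 1) ^ (n + 1)\<close> monomials in \<open>y 0, \<dots>, y n\<close>,
  all of exponents at most \<open>N = (n + 1) D E\<close>, inside a space of dimension at most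
  \<open>(N + 1) ^ n\<close>; for \<open>D = ((n + 1) E + 1) ^ n\<close> the former number is larger.\<close>
lemma mpoly_monomial_relation:
  fixes y :: "nat \<Rightarrow> ('a::finite, 'k::field) mpoly"
  obtains M c where "finite M" and "M \<noteq> {}" and "\<forall>\<alpha>\<in>M. length \<alpha> = Suc (card (UNIV :: 'a set)) \<and> c \<alpha> \<noteq> 0"
    and "(\<Sum>\<alpha>\<in>M. Poly_Mapping.single 0 (c \<alpha>) * list_monomial y \<alpha>) = 0"
proof -
  define n where "n = card (UNIV :: 'a set)"
  have "\<forall>i. \<exists>N. exps_le N (y i)" using exps_le_exists by blast
  then obtain Ei where Ei: "\<And>i. exps_le (Ei i) (y i)" by metis
  define E where "E = (\<Sum>i\<le>n. Ei i)"
  have E: "exps_le E (y i)" if "i \<le> n" for i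
    using exps_le_mono[OF Ei] that unfolding E_def by (meson finite_atMost atMost_iff member_le_sum zero_le)
  define D where "D = ((n + 1) * E + 1) ^ n"
  define N where "N = (n + 1) * D * E"
  define L where "L = {\<alpha>. set \<alpha> \<subseteq> {..D} \<and> length \<alpha> = Suc n}"
  have "finite L" "card L = (D + 1) ^ Suc n"
    unfolding L_def by (simp_all add: finite_lists_length_eq card_lists_length_eq)
  have "exps_le N (list_monomial y \<alpha>)" if "\<alpha> \<in> L" for \<alpha>
  proof -
    have \<alpha>: "length \<alpha> = Suc n" "\<forall>a\<in>set \<alpha>. a \<le> D" using that unfolding L_def by auto
    have "sum_list \<alpha> \<le> length \<alpha> * D" using \<alpha>(2) by (induction \<alpha>) auto
    then have "sum_list \<alpha> \<le> (n + 1) * D" using \<alpha>(1) by simp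
    then have "E * sum_list \<alpha> \<le> N" unfolding N_def by (simp add: mult.commute)
    moreover have "exps_le (E * sum_list \<alpha>) (list_monomial y \<alpha>)"
      using exps_le_list_monomial[of \<alpha> E y] E \<alpha>(1) by auto
    ultimately show ?thesis using exps_le_mono by blast
  qed
  then have span: "list_monomial y ` L \<subseteq> mpoly_vs.span (monomials_exps_le N :: ('a, 'k) mpoly set)"
    using exps_le_in_span by blast
  have finite_monomials: "finite (monomials_exps_le N :: ('a, 'k) mpoly set)"
    and card_le: "card (monomials_exps_le N :: ('a, 'k) mpoly set) \<le> (N + 1) ^ n"
    using card_monomials_exps_le[of N] unfolding n_def by auto
  have card_less: "card (monomials_exps_le N :: ('a, 'k) mpoly set) < card L"
  proof -
    have "N + 1 \<le> (D + 1) * ((n + 1) * E + 1)" unfolding N_def by (simp add: algebra_simps)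
    then have "(N + 1) ^ n \<le> ((D + 1) * ((n + 1) * E + 1)) ^ n" by (rule power_mono) simp
    also have "\<dots> = (D + 1) ^ n * D" by (simp only: power_mult_distrib D_def)
    also have "\<dots> < (D + 1) ^ Suc n" by simp
    finally show ?thesis using card_le \<open>card L = _\<close> by simp
  qed
  obtain M c where "M \<subseteq> L" "M \<noteq> {}" "\<forall>\<alpha>\<in>M. c \<alpha> \<noteq> 0"
      "(\<Sum>\<alpha>\<in>M. Poly_Mapping.single 0 (c \<alpha>) * list_monomial y \<alpha>) = 0"
    by (rule mpoly_vs.family_relation_if_card_gt_span[OF \<open>finite L\<close> finite_monomials span card_less])
  then show ?thesis
    using that[of M c] finite_subset[OF _ \<open>finite L\<close>] unfolding L_def n_def by auto
qed

theorem prime_chain_length_le_card_vars: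
  fixes P :: "nat \<Rightarrow> ('a::finite, 'k::field) mpoly set"
  assumes chain: "prime_chain P k"
  shows "k \<le> card (UNIV :: 'a set)"
proof (rule ccontr)
  define n where "n = card (UNIV :: 'a set)"
  assume "\<not> k \<le> card (UNIV :: 'a set)"
  then have "Suc n \<le> k" unfolding n_def by simp
  have "\<forall>i<k. \<exists>z. z \<in> P (Suc i) \<and> z \<notin> P i" using chain unfolding prime_chain_def by blast
  then obtain x where x: "\<And>i. i < k \<Longrightarrow> x i \<in> P (Suc i) \<and> x i \<notin> P i" by metis
  obtain M c where M: "finite M" "M \<noteq> {}" "\<forall>\<alpha>\<in>M. length \<alpha> = Suc n \<and> c \<alpha> \<noteq> 0"
      and relation: "(\<Sum>\<alpha>\<in>M. Poly_Mapping.single 0 (c \<alpha>) * list_monomial x \<alpha>) = 0"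
    using mpoly_monomial_relation[of x] unfolding n_def by blast
  have "Poly_Mapping.single 0 (c \<alpha>) * Poly_Mapping.single 0 (inverse (c \<alpha>)) = (1 :: ('a, 'k) mpoly)"
    if "\<alpha> \<in> M" for \<alpha>
    using M(3) that by (simp add: mult_single)
  then have units: "\<forall>\<alpha>\<in>M. length \<alpha> = Suc n \<and> Poly_Mapping.single 0 (c \<alpha>) dvd (1 :: ('a, 'k) mpoly)"
    using M(3) by (metis dvdI)
  have primes: "\<forall>i\<le>Suc n. is_prime_ideal (P i)"
    using chain \<open>Suc n \<le> k\<close> unfolding prime_chain_def by auto
  have steps: "\<forall>i<Suc n. P i \<subseteq> P (Suc i) \<and> x i \<in> P (Suc i) \<and> x i \<notin> P i"
  proof (intro allI impI)
    fix i assume "i < Suc n"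
    then have "i < k" using \<open>Suc n \<le> k\<close> by simp
    then show "P i \<subseteq> P (Suc i) \<and> x i \<in> P (Suc i) \<and> x i \<notin> P i"
      using chain x unfolding prime_chain_def by blast
  qed
  have "(\<Sum>\<alpha>\<in>M. Poly_Mapping.single 0 (c \<alpha>) * list_monomial x \<alpha>) \<notin> P 0"
    by (rule prime_chain_monomial_sum_notin[OF M(1,2) units primes steps])
  moreover have "0 \<in> P 0"
    using chain unfolding prime_chain_def by (auto intro: ideal_zero prime_ideal_is_ideal)
  ultimately show False using relation by simp
qed

lemma prime_chain_var_ideals:
  assumes "distinct as" and "set as \<inter> B = {}"
  shows "prime_chain (\<lambda>i. var_ideal (B \<union> set (take i as)) :: ('a::finite, 'k::field) mpoly set) (length as)"
  unfolding prime_chain_def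
proof (intro conjI allI impI)
  fix i
  show "is_prime_ideal (var_ideal (B \<union> set (take i as)) :: ('a, 'k) mpoly set)"
    by (rule is_prime_ideal_var_ideal)
next
  fix i assume i: "i < length as"
  have take_Suc: "take (Suc i) as = take i as @ [as ! i]" using i by (simp add: take_Suc_conv_app_nth)
  have "as ! i \<notin> set (take i as)"
    using assms(1) i by (auto simp: in_set_conv_nth nth_eq_iff_index_eq)
  moreover have "as ! i \<notin> B" using assms(2) i nth_mem by blast
  ultimately have "(Var (as ! i) :: ('a, 'k) mpoly) \<notin> var_ideal (B \<union> set (take i as))"
    by (simp add: Var_in_var_ideal_iff)
  moreover have "(Var (as ! i) :: ('a, 'k) mpoly) \<in> var_ideal (B \<union> set (take (Suc i) as))"
    by (simp add: Var_in_var_ideal_iff take_Suc)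
  moreover have "var_ideal (B \<union> set (take i as)) \<subseteq> (var_ideal (B \<union> set (take (Suc i) as)) :: ('a, 'k) mpoly set)"
    by (rule var_ideal_mono) (auto simp: take_Suc)
  ultimately show "var_ideal (B \<union> set (take i as)) \<subset> (var_ideal (B \<union> set (take (Suc i) as)) :: ('a, 'k) mpoly set)"
    by blast
qed

lemma prime_chain_append:
  assumes Q: "prime_chain Q a" and P: "prime_chain P k" and link: "Q a \<subseteq> P 0"
  shows "prime_chain (\<lambda>i. if i < a then Q i else P (i - a)) (a + k)"
  unfolding prime_chain_def
proof (intro conjI allI impI)
  fix i assume "i \<le> a + k"
  then show "is_prime_ideal (if i < a then Q i else P (i - a))"
    using Q P unfolding prime_chain_def by auto
next
  fix i assume i: "i < a + k"
  consider "Suc i < a" | "Suc i = a" | "a \<le> i" by linarith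
  then show "(if i < a then Q i else P (i - a)) \<subset> (if Suc i < a then Q (Suc i) else P (Suc i - a))"
  proof cases
    case 1
    then show ?thesis using Q unfolding prime_chain_def by auto
  next
    case 2
    then have "Q i \<subset> Q a" using Q unfolding prime_chain_def by auto
    then show ?thesis using 2 link by auto
  next
    case 3
    then have "Suc i - a = Suc (i - a)" "i - a < k" using i by auto
    then show ?thesis using P 3 unfolding prime_chain_def by auto
  qed
qed

lemma prime_chain_from_var_ideal:
  "\<exists>R. prime_chain R (card (UNIV - T)) \<and> R 0 = (var_ideal T :: ('a::finite, 'k::field) mpoly set)"
proof -
  obtain as :: "'a list" where as: "distinct as" "set as = UNIV - T"
    using finite_distinct_list[OF finite] by blast
  have len: "length as = card (UNIV - T)" using distinct_card[OF as(1)] as(2) by simp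
  have "prime_chain (\<lambda>i. var_ideal (T \<union> set (take i as)) :: ('a, 'k) mpoly set) (length as)"
    by (rule prime_chain_var_ideals[OF as(1)]) (use as(2) in blast)
  then show ?thesis unfolding len by (intro exI[of _ "\<lambda>i. var_ideal (T \<union> set (take i as))"]) simp
qed

lemma edge_ideal_subset_var_ideal:
  assumes "transversal H X T"
  shows "edge_ideal H \<subseteq> (var_ideal T :: ('a::finite, 'k::comm_ring_1) mpoly set)"
  unfolding edge_ideal_def
proof (rule ideal_gen_minimal[OF is_ideal_var_ideal], safe)
  fix e assume "e \<in> H"
  then obtain x where x: "x \<in> T" "x \<in> e" using assms unfolding transversal_def by blast
  have "(\<Prod>y\<in>e. Var y :: ('a, 'k) mpoly) = Var x * (\<Prod>y\<in>e - {x}. Var y)"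
    using x(2) by (simp add: prod.remove)
  moreover have "(Var x :: ('a, 'k) mpoly) \<in> var_ideal T" using x(1) by (simp add: Var_in_var_ideal_iff)
  ultimately show "(\<Prod>y\<in>e. Var y :: ('a, 'k) mpoly) \<in> var_ideal T"
    using ideal_mult_right[OF is_ideal_var_ideal] by simp
qed

text \<open>The variables in a prime \<open>Q \<supseteq> I(H)\<close> form a transversal \<open>A\<close>, since \<open>Q\<close> contains the
  product over each edge; so \<open>Q\<close> contains the top of a chain of variable ideals of length \<open>|A|\<close>.\<close>
lemma prime_over_edge_ideal_contains_chain:
  fixes Q :: "('a::finite, 'k::field) mpoly set"
  assumes prime: "is_prime_ideal Q" and over: "edge_ideal H \<subseteq> Q"
  obtains A and R :: "nat \<Rightarrow> ('a, 'k) mpoly set"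
  where "transversal H UNIV A" and "prime_chain R (card A)" and "R (card A) \<subseteq> Q"
proof -
  define A where "A = {v. Var v \<in> Q}"
  have "transversal H UNIV A" unfolding transversal_def
  proof (intro conjI ballI notI)
    fix e assume "e \<in> H" and disjoint: "A \<inter> e = {}"
    have "(\<Prod>x\<in>e. Var x :: ('a, 'k) mpoly) \<in> edge_ideal H"
      unfolding edge_ideal_def by (rule subsetD[OF ideal_gen_superset]) (use \<open>e \<in> H\<close> in blast)
    then have "(\<Prod>x\<in>e. Var x :: ('a, 'k) mpoly) \<in> Q" using over by blast
    then obtain x where "x \<in> e" "Var x \<in> Q" by (rule prime_ideal_prod_in[OF finite prime])
    then show False using disjoint unfolding A_def by blast
  qed simp
  moreover have "var_ideal A \<subseteq> Q"
    unfolding var_ideal_eq_ideal_gen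
    by (rule ideal_gen_minimal[OF prime_ideal_is_ideal[OF prime]]) (auto simp: A_def)
  moreover obtain as where as: "distinct as" "set as = A"
    using finite_distinct_list[OF finite] by blast
  then have "length as = card A" using distinct_card by fastforce
  then have "prime_chain (\<lambda>i. var_ideal (set (take i as)) :: ('a, 'k) mpoly set) (card A)"
    using prime_chain_var_ideals[OF as(1), of "{}"] by simp
  moreover have "var_ideal (set (take (card A) as)) = var_ideal A"
    using as \<open>length as = card A\<close> by simp
  ultimately show ?thesis by (intro that[of A "\<lambda>i. var_ideal (set (take i as))"]) auto
qed

section \<open>Complete multipartite hypergraphs\<close>

lemma transversal_iff_compl_independent:
  "transversal H UNIV T \<longleftrightarrow> independent_set H UNIV (UNIV - T)"
  unfolding transversal_def independent_set_def by blast

lemma Tr_iff_compl_facet: "T \<in> Tr H UNIV \<longleftrightarrow> UNIV - T \<in> facets (Ind H UNIV)"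
proof -
  have "T \<in> Tr H UNIV \<longleftrightarrow> independent_set H UNIV (UNIV - T)
      \<and> (\<forall>T'. independent_set H UNIV (UNIV - T') \<and> T' \<subseteq> T \<longrightarrow> T' = T)"
    unfolding Tr_def by (simp add: transversal_iff_compl_independent)
  also have "\<dots> \<longleftrightarrow> independent_set H UNIV (UNIV - T)
      \<and> (\<forall>G. independent_set H UNIV G \<and> UNIV - T \<subseteq> G \<longrightarrow> G = UNIV - T)"
  proof -
    have compl: "(\<forall>T'. P (UNIV - T') \<and> T' \<subseteq> T \<longrightarrow> T' = T) \<longleftrightarrow> (\<forall>G. P G \<and> UNIV - T \<subseteq> G \<longrightarrow> G = UNIV - T)"
      for P :: "'a set \<Rightarrow> bool"
    proof (intro iffI allI impI)
      fix G assume "\<forall>T'. P (UNIV - T') \<and> T' \<subseteq> T \<longrightarrow> T' = T" and "P G \<and> UNIV - T \<subseteq> G"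
      then have "UNIV - G = T" by (metis Diff_Diff_Int Diff_mono Int_UNIV_left double_diff subset_UNIV)
      then show "G = UNIV - T" by blast
    next
      fix T' assume "\<forall>G. P G \<and> UNIV - T \<subseteq> G \<longrightarrow> G = UNIV - T" and "P (UNIV - T') \<and> T' \<subseteq> T"
      then have "UNIV - T' = UNIV - T" by blast
      then show "T' = T" by blast
    qed
    show ?thesis using compl[of "independent_set H UNIV"] by simp
  qed
  also have "\<dots> \<longleftrightarrow> UNIV - T \<in> facets (Ind H UNIV)"
    unfolding facets_def Ind_def by auto
  finally show ?thesis .
qed

definition sides_met :: "(nat \<Rightarrow> 'a set) \<Rightarrow> nat \<Rightarrow> 'a set \<Rightarrow> nat set" where
  "sides_met V t S = {i\<in>{1..t}. S \<inter> V i \<noteq> {}}"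

lemma sides_met_subset: "sides_met V t S \<subseteq> {1..t}"
  unfolding sides_met_def by auto

lemma finite_sides_met: "finite (sides_met V t S)"
  by (rule finite_subset[OF sides_met_subset]) simp

lemma sides_met_mono: "S \<subseteq> S' \<Longrightarrow> sides_met V t S \<subseteq> sides_met V t S'"
  unfolding sides_met_def by auto

lemma contains_edge_iff_card_sides_met:
  "(\<exists>e\<in>complete_multipartite_edges V t s. e \<subseteq> S) \<longleftrightarrow> s \<le> card (sides_met V t S)"
proof
  assume "\<exists>e\<in>complete_multipartite_edges V t s. e \<subseteq> S"
  then obtain I f where "I \<subseteq> {1..t}" "card I = s" "\<forall>i\<in>I. f i \<in> V i" "f ` I \<subseteq> S"
    unfolding complete_multipartite_edges_def by blast
  then have "I \<subseteq> sides_met V t S" and "card I = s" unfolding sides_met_def by blast+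
  then show "s \<le> card (sides_met V t S)" using card_mono[OF finite_sides_met] by metis
next
  assume "s \<le> card (sides_met V t S)"
  then obtain I where I: "I \<subseteq> sides_met V t S" "card I = s"
    using obtain_subset_with_card_n[of s "sides_met V t S"] by blast
  define f where "f i = (SOME v. v \<in> S \<inter> V i)" for i
  have f: "f i \<in> S \<inter> V i" if "i \<in> I" for i
  proof -
    have "\<exists>v. v \<in> S \<inter> V i" using I(1) that unfolding sides_met_def by blast
    then show ?thesis unfolding f_def by (rule someI_ex)
  qed
  have "I \<subseteq> {1..t}" using I(1) sides_met_subset by blast
  then have "f ` I \<in> complete_multipartite_edges V t s"
    unfolding complete_multipartite_edges_def using I(2) f by (intro CollectI exI[of _ I] exI[of _ f]) auto
  moreover have "f ` I \<subseteq> S" using f by blast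
  ultimately show "\<exists>e\<in>complete_multipartite_edges V t s. e \<subseteq> S" by blast
qed

lemma independent_set_iff_card_sides_met:
  "independent_set (complete_multipartite_edges V t s) UNIV S \<longleftrightarrow> card (sides_met V t S) < s"
  unfolding independent_set_def using contains_edge_iff_card_sides_met[of V t s S] by auto

context
  fixes V :: "nat \<Rightarrow> 'a set" and t :: nat
  assumes sides: "is_partition_into_sides UNIV V t"
begin

lemma side_of_vertex: obtains i where "i \<in> {1..t}" and "x \<in> V i"
  using sides unfolding is_partition_into_sides_def by (metis UNIV_I UN_iff)

lemma sides_disjoint: "i \<in> {1..t} \<Longrightarrow> j \<in> {1..t} \<Longrightarrow> i \<noteq> j \<Longrightarrow> V i \<inter> V j = {}"
  using sides unfolding is_partition_into_sides_def by blast

lemma subset_Union_sides_met: "S \<subseteq> (\<Union>i\<in>sides_met V t S. V i)"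
proof
  fix x assume "x \<in> S"
  obtain i where "i \<in> {1..t}" "x \<in> V i" by (rule side_of_vertex)
  with \<open>x \<in> S\<close> show "x \<in> (\<Union>i\<in>sides_met V t S. V i)" unfolding sides_met_def by blast
qed

lemma sides_met_Union:
  assumes "K \<subseteq> {1..t}"
  shows "sides_met V t (\<Union>i\<in>K. V i) = K"
proof
  show "sides_met V t (\<Union>i\<in>K. V i) \<subseteq> K"
  proof
    fix j assume "j \<in> sides_met V t (\<Union>i\<in>K. V i)"
    then obtain i where "i \<in> K" "V i \<inter> V j \<noteq> {}" "j \<in> {1..t}" unfolding sides_met_def by blast
    then show "j \<in> K" using sides_disjoint[of i j] assms by blast
  qed
  show "K \<subseteq> sides_met V t (\<Union>i\<in>K. V i)"
    using assms sides unfolding sides_met_def is_partition_into_sides_def by blast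
qed

lemma card_Union_sides:
  assumes "finite (UNIV :: 'a set)" and "K \<subseteq> {1..t}"
  shows "card (\<Union>i\<in>K. V i) = (\<Sum>i\<in>K. card (V i))"
proof (rule card_UN_disjoint)
  show "finite K" by (rule finite_subset[OF assms(2)]) simp
  show "\<forall>i\<in>K. finite (V i)" using finite_subset[OF subset_UNIV assms(1)] by blast
  show "\<forall>i\<in>K. \<forall>j\<in>K. i \<noteq> j \<longrightarrow> V i \<inter> V j = {}"
    using sides_disjoint assms(2) by blast
qed

lemma compl_Union_sides:
  assumes "K \<subseteq> {1..t}"
  shows "UNIV - (\<Union>i\<in>K. V i) = (\<Union>i\<in>{1..t} - K. V i)"
proof (intro equalityI subsetI)
  fix x assume "x \<in> UNIV - (\<Union>i\<in>K. V i)"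
  moreover obtain i where "i \<in> {1..t}" "x \<in> V i" by (rule side_of_vertex)
  ultimately show "x \<in> (\<Union>i\<in>{1..t} - K. V i)" by blast
next
  fix x assume "x \<in> (\<Union>i\<in>{1..t} - K. V i)"
  then obtain i where i: "i \<in> {1..t}" "i \<notin> K" "x \<in> V i" by blast
  then have "x \<notin> V j" if "j \<in> K" for j
    using sides_disjoint[of i j] that assms by blast
  then show "x \<in> UNIV - (\<Union>i\<in>K. V i)" by blast
qed

end

lemma sum_le_sum_top:
  fixes f :: "nat \<Rightarrow> nat"
  assumes "\<And>i j. 1 \<le> i \<Longrightarrow> i \<le> j \<Longrightarrow> j \<le> t \<Longrightarrow> f i \<le> f j"
    and "K \<subseteq> {1..t}" and "card K \<le> k" and "k \<le> t"
  shows "sum f K \<le> (\<Sum>i=t-k+1..t. f i)"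
  using assms
proof (induction t arbitrary: K k)
  case 0
  then show ?case by simp
next
  case (Suc t)
  have mono: "\<And>i j. 1 \<le> i \<Longrightarrow> i \<le> j \<Longrightarrow> j \<le> t \<Longrightarrow> f i \<le> f j" using Suc.prems(1) by simp
  have fin: "finite K" by (rule finite_subset[OF Suc.prems(2)]) simp
  consider "k = Suc t" | "k \<le> t" "Suc t \<in> K" | "k \<le> t" "Suc t \<notin> K" using Suc.prems(4) by linarith
  then show ?case
  proof cases
    case 1
    have "sum f K \<le> sum f {1..Suc t}" by (rule sum_mono2) (use Suc.prems(2) in auto)
    then show ?thesis using 1 by simp
  next
    case 2
    then have "0 < card K" using fin card_gt_0_iff by blast
    then have "1 \<le> k" using Suc.prems(3) by linarith
    have "sum f (K - {Suc t}) \<le> (\<Sum>i=t-(k-1)+1..t. f i)"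
      using Suc.IH[OF mono, of "K - {Suc t}" "k - 1"] Suc.prems(2,3) 2 fin by fastforce
    moreover have "t - (k - 1) + 1 = Suc t - k + 1" and "Suc t - k + 1 \<le> Suc t" using \<open>1 \<le> k\<close> 2 by auto
    ultimately show ?thesis
      using 2 fin by (simp add: sum.remove add.commute)
  next
    case 3
    then have "K \<subseteq> {1..t}" using Suc.prems(2) by (auto simp: le_Suc_eq)
    then have "sum f K \<le> (\<Sum>i=t-k+1..t. f i)" using Suc.IH[OF mono] Suc.prems(3) 3 by blast
    also have "\<dots> \<le> (\<Sum>i=t-k+1..t. f (Suc i))" using Suc.prems(1) by (intro sum_mono) auto
    also have "\<dots> = (\<Sum>i=Suc t-k+1..Suc t. f i)"
    proof -
      have "Suc t - k + 1 = Suc (t - k + 1)" using 3 by simp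
      then show ?thesis by (simp only: sum.shift_bounds_cl_Suc_ivl)
    qed
    finally show ?thesis .
  qed
qed

locale complete_multipartite =
  fixes V :: "nat \<Rightarrow> 'a::finite set" and t s :: nat
  assumes two_le_s: "2 \<le> s" and s_le_t: "s \<le> t"
    and sides: "is_partition_into_sides (UNIV :: 'a set) V t"
    and sorted: "\<And>i j. 1 \<le> i \<Longrightarrow> i \<le> j \<Longrightarrow> j \<le> t \<Longrightarrow> card (V i) \<le> card (V j)"
begin

abbreviation edges :: "'a set set" where
  "edges \<equiv> complete_multipartite_edges V t s"

definition top_sides :: "'a set" where
  "top_sides = (\<Union>i\<in>{t-s+2..t}. V i)"

definition top_card :: nat where
  "top_card = (\<Sum>i=t-s+2..t. card (V i))"

definition bottom_card :: nat where
  "bottom_card = (\<Sum>i=1..t-s+1. card (V i))"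

lemma top_indices: "{t-s+2..t} \<subseteq> {1..t}" "card {t-s+2..t} = s - 1"
  using two_le_s s_le_t by auto

lemma facets_Ind_eq: "facets (Ind edges UNIV) = {\<Union>i\<in>J. V i | J. J \<subseteq> {1..t} \<and> card J = s - 1}"
proof (intro equalityI subsetI)
  fix F assume "F \<in> facets (Ind edges UNIV)"
  then have indep: "card (sides_met V t F) < s"
    and maximal: "\<And>G. card (sides_met V t G) < s \<Longrightarrow> F \<subseteq> G \<Longrightarrow> G = F"
    unfolding facets_def Ind_def by (auto simp: independent_set_iff_card_sides_met)
  define K where "K = sides_met V t F"
  have K: "K \<subseteq> {1..t}" "finite K" unfolding K_def using sides_met_subset finite_sides_met by auto
  have F_sub: "F \<subseteq> (\<Union>i\<in>K. V i)" unfolding K_def by (rule subset_Union_sides_met[OF sides])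
  have "card (sides_met V t (\<Union>i\<in>K. V i)) < s" using sides_met_Union[OF sides K(1)] indep K_def by simp
  then have F_eq: "(\<Union>i\<in>K. V i) = F" using maximal F_sub by blast
  have "card K = s - 1"
  proof (rule ccontr)
    assume "card K \<noteq> s - 1"
    then have less: "card K < s - 1" using indep K_def by simp
    have "\<not> {1..t} \<subseteq> K"
    proof
      assume "{1..t} \<subseteq> K"
      then have "card {1..t} \<le> card K" using card_mono K(2) by blast
      then show False using less s_le_t by simp
    qed
    then obtain j where j: "j \<in> {1..t}" "j \<notin> K" by blast
    then have K': "insert j K \<subseteq> {1..t}" using K by blast
    have "card (sides_met V t (\<Union>i\<in>insert j K. V i)) < s"
      using sides_met_Union[OF sides K'] j K less by simp
    moreover have "F \<subseteq> (\<Union>i\<in>insert j K. V i)" using F_sub by blast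
    ultimately have "(\<Union>i\<in>insert j K. V i) = F" using maximal by blast
    then have "sides_met V t F = insert j K" using sides_met_Union[OF sides K'] by simp
    then show False using j K_def by blast
  qed
  then show "F \<in> {\<Union>i\<in>J. V i | J. J \<subseteq> {1..t} \<and> card J = s - 1}" using F_eq K by blast
next
  fix F assume "F \<in> {\<Union>i\<in>J. V i | J. J \<subseteq> {1..t} \<and> card J = s - 1}"
  then obtain J where J: "J \<subseteq> {1..t}" "card J = s - 1" "F = (\<Union>i\<in>J. V i)" by blast
  have met: "sides_met V t F = J" using sides_met_Union[OF sides J(1)] J(3) by simp
  have "G = F" if "independent_set edges UNIV G" "F \<subseteq> G" for G
  proof -
    have "J \<subseteq> sides_met V t G" using sides_met_mono[OF that(2), of V t] met by simp
    moreover have "card (sides_met V t G) \<le> card J"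
      using that(1) J(2) two_le_s by (simp add: independent_set_iff_card_sides_met)
    ultimately have "J = sides_met V t G" using card_seteq[OF finite_sides_met] by blast
    then have "G \<subseteq> F" using subset_Union_sides_met[OF sides, of G] J(3) by simp
    then show "G = F" using that(2) by blast
  qed
  moreover have "independent_set edges UNIV F"
    using met J(2) two_le_s by (simp add: independent_set_iff_card_sides_met)
  ultimately show "F \<in> facets (Ind edges UNIV)" unfolding facets_def Ind_def by blast
qed

lemma Tr_eq: "Tr edges UNIV = {\<Union>i\<in>J. V i | J. J \<subseteq> {1..t} \<and> card J = t - s + 1}"
proof -
  have "T \<in> Tr edges UNIV \<longleftrightarrow> (\<exists>J. J \<subseteq> {1..t} \<and> card J = t - s + 1 \<and> T = (\<Union>i\<in>J. V i))" for T
  proof -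
    have "T \<in> Tr edges UNIV \<longleftrightarrow> (\<exists>J. J \<subseteq> {1..t} \<and> card J = s - 1 \<and> UNIV - T = (\<Union>i\<in>J. V i))"
      by (auto simp: Tr_iff_compl_facet facets_Ind_eq)
    also have "\<dots> \<longleftrightarrow> (\<exists>J. J \<subseteq> {1..t} \<and> card J = s - 1 \<and> T = (\<Union>i\<in>{1..t} - J. V i))"
      using compl_Union_sides[OF sides] by (metis Diff_Diff_Int Int_UNIV_left)
    also have "\<dots> \<longleftrightarrow> (\<exists>J. J \<subseteq> {1..t} \<and> card J = t - s + 1 \<and> T = (\<Union>i\<in>J. V i))"
    proof
      assume "\<exists>J. J \<subseteq> {1..t} \<and> card J = s - 1 \<and> T = (\<Union>i\<in>{1..t} - J. V i)"
      then obtain J where "J \<subseteq> {1..t}" "card J = s - 1" "T = (\<Union>i\<in>{1..t} - J. V i)" by blast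
      moreover have "card ({1..t} - J) = t - s + 1"
        using calculation two_le_s s_le_t by (simp add: card_Diff_subset finite_subset)
      ultimately show "\<exists>J. J \<subseteq> {1..t} \<and> card J = t - s + 1 \<and> T = (\<Union>i\<in>J. V i)" by blast
    next
      assume "\<exists>J. J \<subseteq> {1..t} \<and> card J = t - s + 1 \<and> T = (\<Union>i\<in>J. V i)"
      then obtain J where J: "J \<subseteq> {1..t}" "card J = t - s + 1" "T = (\<Union>i\<in>J. V i)" by blast
      then have "{1..t} - ({1..t} - J) = J" by blast
      moreover have "card ({1..t} - J) = s - 1"
        using J two_le_s s_le_t by (simp add: card_Diff_subset finite_subset)
      ultimately show "\<exists>J. J \<subseteq> {1..t} \<and> card J = s - 1 \<and> T = (\<Union>i\<in>{1..t} - J. V i)"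
        using J(3) by (intro exI[of _ "{1..t} - J"]) auto
    qed
    finally show ?thesis .
  qed
  then show ?thesis by blast
qed

lemma card_UNIV_eq: "card (UNIV :: 'a set) = bottom_card + top_card"
proof -
  have "UNIV = (\<Union>i\<in>{1..t}. V i)" using sides unfolding is_partition_into_sides_def by simp
  then have "card (UNIV :: 'a set) = (\<Sum>i\<in>{1..t}. card (V i))"
    using card_Union_sides[OF sides finite_UNIV, of "{1..t}"] by simp
  also have "{1..t} = {1..t-s+1} \<union> {t-s+2..t}" using two_le_s s_le_t by auto
  also have "(\<Sum>i\<in>{1..t-s+1} \<union> {t-s+2..t}. card (V i)) = bottom_card + top_card"
    unfolding bottom_card_def top_card_def by (rule sum.union_disjoint) auto
  finally show ?thesis .
qed

lemma independent_top_sides: "independent_set edges UNIV top_sides"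
  unfolding top_sides_def using sides_met_Union[OF sides top_indices(1)] top_indices(2) two_le_s
  by (simp add: independent_set_iff_card_sides_met)

lemma card_top_sides: "card top_sides = top_card"
  unfolding top_sides_def top_card_def by (rule card_Union_sides[OF sides finite_UNIV top_indices(1)])

lemma card_independent_le: "independent_set edges UNIV S \<Longrightarrow> card S \<le> top_card"
proof -
  assume "independent_set edges UNIV S"
  then have met: "card (sides_met V t S) \<le> s - 1" by (simp add: independent_set_iff_card_sides_met)
  have "card S \<le> card (\<Union>i\<in>sides_met V t S. V i)"
    by (rule card_mono[OF finite subset_Union_sides_met[OF sides]])
  also have "\<dots> = (\<Sum>i\<in>sides_met V t S. card (V i))"
    by (rule card_Union_sides[OF sides finite_UNIV sides_met_subset])
  also have "\<dots> \<le> (\<Sum>i=t-(s-1)+1..t. card (V i))"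
    by (rule sum_le_sum_top[OF sorted sides_met_subset met]) (use s_le_t in auto)
  also have "t - (s - 1) + 1 = t - s + 2" using two_le_s s_le_t by simp
  finally show ?thesis unfolding top_card_def .
qed

lemma transversal_compl_top_sides: "transversal edges UNIV (UNIV - top_sides)"
  using independent_top_sides by (simp add: transversal_iff_compl_independent Diff_Diff_Int)

lemma card_transversal_ge: "transversal edges UNIV T \<Longrightarrow> bottom_card \<le> card T"
  using card_independent_le[of "UNIV - T"] card_UNIV_eq
  by (simp add: transversal_iff_compl_independent card_Diff_subset)

lemma indep_number_eq: "indep_number edges UNIV = top_card"
  unfolding indep_number_def
proof (rule Max_eqI)
  show "finite {card S |S. independent_set edges UNIV S}"
    by (rule finite_subset[of _ "{..card (UNIV :: 'a set)}"]) (auto intro: card_mono)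
  show "y \<le> top_card" if "y \<in> {card S |S. independent_set edges UNIV S}" for y
    using that card_independent_le by blast
  show "top_card \<in> {card S |S. independent_set edges UNIV S}"
    using independent_top_sides card_top_sides by (intro CollectI exI[of _ top_sides]) simp
qed

lemma transversal_number_eq: "transversal_number edges UNIV = bottom_card"
  unfolding transversal_number_def
proof (rule Min_eqI)
  show "finite {card T |T. transversal edges UNIV T}"
    by (rule finite_subset[of _ "{..card (UNIV :: 'a set)}"]) (auto intro: card_mono)
  show "bottom_card \<le> y" if "y \<in> {card T |T. transversal edges UNIV T}" for y
    using that card_transversal_ge by blast
  have "card (UNIV - top_sides) = bottom_card"
    using card_UNIV_eq card_top_sides by (simp add: card_Diff_subset)
  then show "bottom_card \<in> {card T |T. transversal edges UNIV T}"
    using transversal_compl_top_sides by (intro CollectI exI[of _ "UNIV - top_sides"]) simp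
qed

lemma complex_dim_Ind_eq: "complex_dim (Ind edges UNIV) + 1 = int top_card"
proof -
  have "card ` Ind edges UNIV = {card S |S. independent_set edges UNIV S}" unfolding Ind_def by blast
  then show ?thesis using indep_number_eq unfolding indep_number_def complex_dim_def by simp
qed

lemma prime_chain_over_edge_ideal_le:
  fixes P :: "nat \<Rightarrow> ('a, 'k::field) mpoly set"
  assumes chain: "prime_chain P k" and over: "edge_ideal edges \<subseteq> P 0"
  shows "k \<le> top_card"
proof -
  have "is_prime_ideal (P 0)" using chain unfolding prime_chain_def by simp
  then obtain A and R :: "nat \<Rightarrow> ('a, 'k) mpoly set"
    where "transversal edges UNIV A" "prime_chain R (card A)" "R (card A) \<subseteq> P 0"
    using prime_over_edge_ideal_contains_chain over by blast
  then have "card A + k \<le> card (UNIV :: 'a set)" and "bottom_card \<le> card A"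
    using prime_chain_length_le_card_vars[OF prime_chain_append] chain card_transversal_ge by blast+
  then show ?thesis using card_UNIV_eq by simp
qed

lemma prime_chain_over_edge_ideal_exists:
  "\<exists>P. prime_chain P top_card \<and> edge_ideal edges \<subseteq> (P 0 :: ('a, 'k::field) mpoly set)"
proof -
  have "card (UNIV - (UNIV - top_sides)) = top_card" using card_top_sides by (simp add: Diff_Diff_Int)
  then show ?thesis
    using prime_chain_from_var_ideal[of "UNIV - top_sides", where 'k = 'k]
      edge_ideal_subset_var_ideal[OF transversal_compl_top_sides] by metis
qed

lemma krull_dim_quot_eq: "krull_dim_quot (edge_ideal edges :: ('a, 'k::field) mpoly set) = enat top_card"
  unfolding krull_dim_quot_def
proof (rule antisym)
  show "Sup {enat n |n P. prime_chain P n \<and> (edge_ideal edges :: ('a, 'k) mpoly set) \<subseteq> P 0} \<le> enat top_card"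
  proof (rule Sup_least)
    fix x assume "x \<in> {enat n |n P. prime_chain P n \<and> (edge_ideal edges :: ('a, 'k) mpoly set) \<subseteq> P 0}"
    then obtain k and P :: "nat \<Rightarrow> ('a, 'k) mpoly set"
      where "x = enat k" "prime_chain P k" "edge_ideal edges \<subseteq> P 0" by blast
    then show "x \<le> enat top_card" using prime_chain_over_edge_ideal_le by simp
  qed
  obtain P :: "nat \<Rightarrow> ('a, 'k) mpoly set" where "prime_chain P top_card" "edge_ideal edges \<subseteq> P 0"
    using prime_chain_over_edge_ideal_exists by blast
  then show "enat top_card \<le> Sup {enat n |n P. prime_chain P n \<and> (edge_ideal edges :: ('a, 'k) mpoly set) \<subseteq> P 0}"
    by (intro Sup_upper) blast
qed

lemma prime_height_over_edge_ideal_ge: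
  fixes Q :: "('a, 'k::field) mpoly set"
  assumes prime: "is_prime_ideal Q" and over: "edge_ideal edges \<subseteq> Q"
  shows "enat bottom_card \<le> prime_height Q"
proof -
  obtain A and R :: "nat \<Rightarrow> ('a, 'k) mpoly set"
    where A: "transversal edges UNIV A" and R: "prime_chain R (card A)" "R (card A) \<subseteq> Q"
    using prime_over_edge_ideal_contains_chain[OF prime over] by blast
  have "prime_chain (\<lambda>_. Q) 0" using prime unfolding prime_chain_def by simp
  from prime_chain_append[OF R(1) this R(2)]
  have "prime_chain (\<lambda>i. if i < card A then R i else Q) (card A)" by simp
  then have "enat (card A) \<le> prime_height Q"
    unfolding prime_height_def by (intro Sup_upper) force
  then show ?thesis using card_transversal_ge[OF A] by (meson enat_ord_simps(1) order_trans)
qed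

lemma prime_height_var_ideal_le:
  "prime_height (var_ideal (UNIV - top_sides) :: ('a, 'k::field) mpoly set) \<le> enat bottom_card"
  unfolding prime_height_def
proof (rule Sup_least)
  fix x assume "x \<in> {enat n |n P. prime_chain P n \<and> P n = (var_ideal (UNIV - top_sides) :: ('a, 'k) mpoly set)}"
  then obtain k and P :: "nat \<Rightarrow> ('a, 'k) mpoly set" where x: "x = enat k" and P: "prime_chain P k" "P k = var_ideal (UNIV - top_sides)"
    by blast
  obtain R :: "nat \<Rightarrow> ('a, 'k) mpoly set"
    where "prime_chain R top_card" "R 0 = var_ideal (UNIV - top_sides)"
    using prime_chain_from_var_ideal[of "UNIV - top_sides"] card_top_sides by (auto simp: Diff_Diff_Int)
  then have "k + top_card \<le> card (UNIV :: 'a set)"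
    using prime_chain_length_le_card_vars[OF prime_chain_append[OF P(1)]] P(2) by simp
  then show "x \<le> enat bottom_card" using x card_UNIV_eq by simp
qed

lemma ideal_height_eq: "ideal_height (edge_ideal edges :: ('a, 'k::field) mpoly set) = enat bottom_card"
  unfolding ideal_height_def
proof (rule antisym)
  have "is_prime_ideal (var_ideal (UNIV - top_sides) :: ('a, 'k) mpoly set)"
    and "edge_ideal edges \<subseteq> (var_ideal (UNIV - top_sides) :: ('a, 'k) mpoly set)"
    using is_prime_ideal_var_ideal edge_ideal_subset_var_ideal[OF transversal_compl_top_sides] by auto
  then show "Inf {prime_height Q |Q. is_prime_ideal Q \<and> (edge_ideal edges :: ('a, 'k) mpoly set) \<subseteq> Q}
      \<le> enat bottom_card"
    using prime_height_var_ideal_le by (blast intro: Inf_lower2)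
  show "enat bottom_card
      \<le> Inf {prime_height Q |Q. is_prime_ideal Q \<and> (edge_ideal edges :: ('a, 'k) mpoly set) \<subseteq> Q}"
    using prime_height_over_edge_ideal_ge by (auto intro: Inf_greatest)
qed

end

theorem proposition2p1:
  fixes V :: "nat \<Rightarrow> 'a::finite set" and t s :: nat
  defines "H \<equiv> complete_multipartite_edges V t s"
  assumes "2 \<le> s" and "s \<le> t"
    and sides: "is_partition_into_sides (UNIV :: 'a set) V t"
    and sorted: "\<And>i j. 1 \<le> i \<Longrightarrow> i \<le> j \<Longrightarrow> j \<le> t \<Longrightarrow> card (V i) \<le> card (V j)"
  shows
    "facets (Ind H UNIV) = {\<Union>i\<in>J. V i | J. J \<subseteq> {1..t} \<and> card J = s - 1}
     \<and> Tr H UNIV = {\<Union>i\<in>J. V i | J. J \<subseteq> {1..t} \<and> card J = t - s + 1}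
     \<and> indep_number H UNIV = (\<Sum>i=t-s+2..t. card (V i))
     \<and> transversal_number H UNIV = (\<Sum>i=1..t-s+1. card (V i))
     \<and> krull_dim_quot (edge_ideal H :: ('a, 'k::field) mpoly set) = enat (nat (complex_dim (Ind H UNIV) + 1))
     \<and> complex_dim (Ind H UNIV) + 1 = int (\<Sum>i=t-s+2..t. card (V i))
     \<and> ideal_height (edge_ideal H :: ('a, 'k) mpoly set) = enat (\<Sum>i=1..t-s+1. card (V i))
     \<and> (\<forall>m\<ge>1. (\<forall>i\<in>{1..t}. card (V i) = m) \<longrightarrow>
          ideal_height (edge_ideal H :: ('a, 'k) mpoly set) = enat (m * (t - s + 1)) \<and>
          krull_dim_quot (edge_ideal H :: ('a, 'k) mpoly set) = enat (m * (s - 1)))"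
proof -
  interpret complete_multipartite V t s
    using \<open>2 \<le> s\<close> \<open>s \<le> t\<close> sides sorted by unfold_locales
  have balanced: "bottom_card = m * (t - s + 1) \<and> top_card = m * (s - 1)"
    if "\<forall>i\<in>{1..t}. card (V i) = m" for m
  proof -
    have "bottom_card = (\<Sum>i=1..t-s+1. m)"
      unfolding bottom_card_def using that \<open>2 \<le> s\<close> \<open>s \<le> t\<close> by (intro sum.cong) auto
    moreover have "top_card = (\<Sum>i=t-s+2..t. m)"
      unfolding top_card_def using that by (intro sum.cong) auto
    ultimately show ?thesis using top_indices(2) by simp
  qed
  show ?thesis
    unfolding H_def top_card_def[symmetric] bottom_card_def[symmetric]
    using facets_Ind_eq Tr_eq indep_number_eq transversal_number_eq complex_dim_Ind_eq
      krull_dim_quot_eq[where 'k = 'k] ideal_height_eq[where 'k = 'k] balanced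
    by simp
qed

end
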